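(* In the setting below, let $y^\star,y'\in\mathcal{Y}$ be distinct with $p_{\mathrm{ref}}(y^\star)>0$ and $p_{\mathrm{ref}}(y')>0$. Then: (i) if $\alpha_{\mathrm{KL}}>0$, the point mass $\delta_{y^\star}$ is not a stationary point of $\mathcal{J}$ on $\mathcal{F}$; (ii) if $\alpha_{\mathrm{KL}}=0$ and $$r(y^\star)-r(y')<\alpha_{\mathrm{div}}\big(1-c(y^\star,y')\big),$$ then $\delta_{y^\star}$ is not a local maximizer of $\mathcal{J}$ on $\mathcal{F}$.
   Context: Let $\mathcal{Y}$ be a finite set of sequences, $p_{\mathrm{ref}}$ a probability distribution on $\mathcal{Y}$, $r:\mathcal{Y}\to\mathbb{R}$ a reward, $\psi:\mathcal{Y}\to\mathbb{S}^{d-1}$ a unit-norm embedding, $c(y,y')=\langle\psi(y),\psi(y')\rangle$ (cosine similarity), and $\alpha_{\mathrm{KL}}\ge0$, $\alpha_{\mathrm{div}}\ge 0$. The feasible set is $\mathcal{F}=\{p\in\Delta(\mathcal{Y}): p\ll p_{\mathrm{ref}}\}$ and the objective is $$\mathcal{J}[p]=\mathbb{E}_{y\sim p}[r(y)]-\alpha_{\mathrm{KL}}\,\mathrm{KL}(p\,\|\,p_{\mathrm{ref}})-\frac{\alpha_{\mathrm{div}}}{2}\,\mathbb{E}_{(y,y')\sim p\otimes p}[c(y,y')],$$ with $\mathrm{KL}(p\|q)=\sum_y p(y)\log\frac{p(y)}{q(y)}$ and pair expectations over two independent draws from $p$. $\delta_y$ denotes the point mass at $y$. *)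

theory Defs
  imports "HOL-Analysis.Analysis"
begin

definition is_dist :: "('y::finite \<Rightarrow> real) \<Rightarrow> bool" where
  "is_dist p \<longleftrightarrow> (\<forall>y. 0 \<le> p y) \<and> (\<Sum>y\<in>UNIV. p y) = 1"

definition abs_cont :: "('y::finite \<Rightarrow> real) \<Rightarrow> ('y \<Rightarrow> real) \<Rightarrow> bool" where
  "abs_cont p q \<longleftrightarrow> (\<forall>y. q y = 0 \<longrightarrow> p y = 0)"

definition feasible :: "('y::finite \<Rightarrow> real) \<Rightarrow> ('y \<Rightarrow> real) set" where
  "feasible pref = {p. is_dist p \<and> abs_cont p pref}"

definition KL :: "('y::finite \<Rightarrow> real) \<Rightarrow> ('y \<Rightarrow> real) \<Rightarrow> real" where
  "KL p q = (\<Sum>y\<in>UNIV. if p y = 0 then 0 else p y * ln (p y / q y))"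

definition cos_sim :: "('y \<Rightarrow> real ^ 'd) \<Rightarrow> 'y \<Rightarrow> 'y \<Rightarrow> real" where
  "cos_sim psi y y' = psi y \<bullet> psi y'"

definition objJ :: "('y::finite \<Rightarrow> real) \<Rightarrow> ('y \<Rightarrow> real) \<Rightarrow> ('y \<Rightarrow> real ^ 'd)
     \<Rightarrow> real \<Rightarrow> real \<Rightarrow> ('y \<Rightarrow> real) \<Rightarrow> real" where
  "objJ r pref psi aKL adiv p =
     (\<Sum>y\<in>UNIV. p y * r y) - aKL * KL p pref
     - adiv / 2 * (\<Sum>y\<in>UNIV. \<Sum>y'\<in>UNIV. p y * p y' * cos_sim psi y y')"

definition point_mass :: "'y \<Rightarrow> 'y \<Rightarrow> real" where
  "point_mass y0 = (\<lambda>y. if y = y0 then 1 else 0)"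

text \<open>First-order stationarity on a convex feasible set: no feasible direction
  has a positive (upper) one-sided directional derivative, i.e.
  limsup_{t->0+} (J((1-t)p + t q) - J p)/t <= 0 for every feasible q.\<close>
definition stationary_on :: "(('y \<Rightarrow> real) \<Rightarrow> real) \<Rightarrow> ('y \<Rightarrow> real) set \<Rightarrow> ('y \<Rightarrow> real) \<Rightarrow> bool" where
  "stationary_on J F p \<longleftrightarrow> p \<in> F \<and>
     (\<forall>q\<in>F. \<forall>\<epsilon>>0. \<exists>\<delta>>0. \<forall>t. 0 < t \<and> t < \<delta> \<longrightarrow>
        (J (\<lambda>y. (1 - t) * p y + t * q y) - J p) / t \<le> \<epsilon>)"

text \<open>Local maximizer on F (w.r.t. the L1 distance; all norms on the finite-dimensional
  space are equivalent).\<close>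
definition local_max_on :: "(('y::finite \<Rightarrow> real) \<Rightarrow> real) \<Rightarrow> ('y \<Rightarrow> real) set \<Rightarrow> ('y \<Rightarrow> real) \<Rightarrow> bool" where
  "local_max_on J F p \<longleftrightarrow> p \<in> F \<and>
     (\<exists>\<epsilon>>0. \<forall>q\<in>F. (\<Sum>y\<in>UNIV. \<bar>q y - p y\<bar>) < \<epsilon> \<longrightarrow> J q \<le> J p)"

end

theory Submission
  imports Defs "HOL-Real_Asymp.Real_Asymp"
begin

text \<open>Move along the segment from \<open>\<delta>\<^sub>y\<^sub>s\<close> towards \<open>\<delta>\<^sub>y\<^sub>'\<close>. On the mixture
  \<open>(1 - t) \<delta>\<^sub>y\<^sub>s + t \<delta>\<^sub>y\<^sub>'\<close> the gain of the objective over \<open>\<delta>\<^sub>y\<^sub>s\<close> is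
  \<open>t (r y' - r ys + aKL ln (pref y' / pref ys)) + aKL H(t) + adiv t (1 - t) (1 - c(ys, y'))\<close>,
  where \<open>H(t) = - t ln t - (1 - t) ln (1 - t)\<close> is the binary entropy. If \<open>aKL > 0\<close>, the
  entropy term has infinite slope at \<open>t = 0\<close>, which rules out stationarity.
  If \<open>aKL = 0\<close>, the slope at \<open>t = 0\<close> is \<open>r y' - r ys + adiv (1 - c(ys, y'))\<close>, which the
  hypothesis makes positive, so every neighbourhood of \<open>\<delta>\<^sub>y\<^sub>s\<close> contains better points.\<close>

lemma eventually_at_right_less_1: "\<forall>\<^sub>F t in at_right (0::real). t < 1"
  by (simp add: eventually_at_right_field) (meson zero_less_one)

lemma not_stationary_on_if_slope_tendsto_at_top:
  assumes "q \<in> F"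
    and "filterlim (\<lambda>t. (J (\<lambda>y. (1 - t) * p y + t * q y) - J p) / t) at_top (at_right 0)"
  shows "\<not> stationary_on J F p"
proof
  assume "stationary_on J F p"
  then obtain \<delta> where "\<delta> > 0"
    and bounded: "\<And>t. 0 < t \<Longrightarrow> t < \<delta> \<Longrightarrow> (J (\<lambda>y. (1 - t) * p y + t * q y) - J p) / t \<le> 1"
    using \<open>q \<in> F\<close> unfolding stationary_on_def by (meson zero_less_one)
  have "\<forall>\<^sub>F t in at_right 0. (J (\<lambda>y. (1 - t) * p y + t * q y) - J p) / t > 1"
    using assms(2) by (simp add: filterlim_at_top_dense)
  moreover have "\<forall>\<^sub>F t in at_right 0. 0 < t \<and> t < (\<delta>::real)"
    using \<open>\<delta> > 0\<close> by (simp add: eventually_at_right_field) (meson dense)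
  ultimately have "\<forall>\<^sub>F t in at_right (0::real). False"
    by eventually_elim (use bounded in force)
  then show False by simp
qed

lemma sum_abs_segment_diff:
  fixes p q :: "'y::finite \<Rightarrow> real"
  assumes "t \<ge> 0"
  shows "(\<Sum>y\<in>UNIV. \<bar>((1 - t) * p y + t * q y) - p y\<bar>) = t * (\<Sum>y\<in>UNIV. \<bar>q y - p y\<bar>)"
proof -
  have "(1 - t) * p y + t * q y - p y = t * (q y - p y)" for y
    by (simp add: algebra_simps)
  then have "\<bar>((1 - t) * p y + t * q y) - p y\<bar> = t * \<bar>q y - p y\<bar>" for y
    using assms by (simp add: abs_mult)
  then show ?thesis by (simp add: sum_distrib_left)
qed

lemma not_local_max_on_if_slope_tendsto_pos:
  fixes p q :: "'y::finite \<Rightarrow> real"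
  assumes "\<forall>\<^sub>F t in at_right 0. (\<lambda>y. (1 - t) * p y + t * q y) \<in> F"
    and "((\<lambda>t. (J (\<lambda>y. (1 - t) * p y + t * q y) - J p) / t) \<longlongrightarrow> L) (at_right 0)"
    and "L > 0"
  shows "\<not> local_max_on J F p"
proof
  assume "local_max_on J F p"
  then obtain \<epsilon> where "\<epsilon> > 0" and max: "\<And>q'. q' \<in> F \<Longrightarrow>
      (\<Sum>y\<in>UNIV. \<bar>q' y - p y\<bar>) < \<epsilon> \<Longrightarrow> J q' \<le> J p"
    unfolding local_max_on_def by blast
  have "((\<lambda>t. t * (\<Sum>y\<in>UNIV. \<bar>q y - p y\<bar>)) \<longlongrightarrow> 0 * (\<Sum>y\<in>UNIV. \<bar>q y - p y\<bar>)) (at_right 0)"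
    by (intro tendsto_intros)
  then have "\<forall>\<^sub>F t in at_right 0. t * (\<Sum>y\<in>UNIV. \<bar>q y - p y\<bar>) < \<epsilon>"
    using \<open>\<epsilon> > 0\<close> by (simp add: order_tendsto_iff)
  moreover have "\<forall>\<^sub>F t in at_right 0. (J (\<lambda>y. (1 - t) * p y + t * q y) - J p) / t > 0"
    using assms(2,3) by (simp add: order_tendsto_iff)
  moreover have "\<forall>\<^sub>F t in at_right (0::real). t > 0"
    by (simp add: eventually_at_right_less)
  ultimately have "\<forall>\<^sub>F t in at_right (0::real). False"
    using assms(1)
  proof eventually_elim
    case (elim t)
    then have "J (\<lambda>y. (1 - t) * p y + t * q y) > J p"
      by (simp add: zero_less_divide_iff)
    with elim show False
      using max[of "\<lambda>y. (1 - t) * p y + t * q y"] by (simp add: sum_abs_segment_diff)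
  qed
  then show False by simp
qed

lemma point_mass_in_feasible:
  assumes "pref y0 > 0"
  shows "point_mass y0 \<in> feasible pref"
  using assms by (auto simp: feasible_def is_dist_def abs_cont_def point_mass_def)

lemma convex_comb_in_feasible:
  assumes "p \<in> feasible pref" "q \<in> feasible pref" "0 \<le> t" "t \<le> 1"
  shows "(\<lambda>y. (1 - t) * p y + t * q y) \<in> feasible pref"
  using assms
  by (auto simp: feasible_def is_dist_def abs_cont_def sum.distrib
      simp flip: sum_distrib_left intro!: add_nonneg_nonneg)

lemma sum_two_point_mass:
  fixes g :: "real \<Rightarrow> 'y::finite \<Rightarrow> real"
  assumes "u \<noteq> v" and "\<And>y. g 0 y = 0"
  shows "(\<Sum>y\<in>UNIV. g (a * point_mass u y + b * point_mass v y) y) = g a u + g b v"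
proof -
  have "(\<Sum>y\<in>UNIV. g (a * point_mass u y + b * point_mass v y) y)
      = (\<Sum>y\<in>UNIV. (if y = u then g a u else 0) + (if y = v then g b v else 0))"
    by (rule sum.cong) (auto simp: point_mass_def assms)
  also have "\<dots> = g a u + g b v"
    by (simp add: sum.distrib)
  finally show ?thesis .
qed

lemma cos_sim_self:
  assumes "norm (psi y) = 1"
  shows "cos_sim psi y y = 1"
  using assms by (simp add: cos_sim_def flip: power2_norm_eq_inner)

lemma cos_sim_commute: "cos_sim psi y y' = cos_sim psi y' y"
  by (simp add: cos_sim_def inner_commute)

lemma objJ_two_point:
  fixes r pref :: "'y::finite \<Rightarrow> real" and psi :: "'y \<Rightarrow> real ^ 'd"
  assumes "u \<noteq> v" and "norm (psi u) = 1" "norm (psi v) = 1"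
  shows "objJ r pref psi aKL adiv (\<lambda>y. a * point_mass u y + b * point_mass v y)
    = a * r u + b * r v
      - aKL * ((if a = 0 then 0 else a * ln (a / pref u)) + (if b = 0 then 0 else b * ln (b / pref v)))
      - adiv / 2 * (a\<^sup>2 + 2 * a * b * cos_sim psi u v + b\<^sup>2)"
proof -
  let ?p = "\<lambda>y. a * point_mass u y + b * point_mass v y"
  have linear: "(\<Sum>y\<in>UNIV. ?p y * f y) = a * f u + b * f v" for f :: "'y \<Rightarrow> real"
    using sum_two_point_mass[OF assms(1), of "\<lambda>x y. x * f y"] by simp
  have "(\<Sum>y\<in>UNIV. \<Sum>z\<in>UNIV. ?p y * ?p z * cos_sim psi y z)
      = (\<Sum>y\<in>UNIV. ?p y * (a * cos_sim psi y u + b * cos_sim psi y v))"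
    by (simp add: linear mult.assoc flip: sum_distrib_left)
  also have "\<dots> = a * (a * cos_sim psi u u + b * cos_sim psi u v)
      + b * (a * cos_sim psi v u + b * cos_sim psi v v)"
    by (rule linear)
  also have "\<dots> = a\<^sup>2 + 2 * a * b * cos_sim psi u v + b\<^sup>2"
    by (simp add: cos_sim_self assms cos_sim_commute[of psi v u] algebra_simps power2_eq_square)
  finally have quadratic: "(\<Sum>y\<in>UNIV. \<Sum>z\<in>UNIV. ?p y * ?p z * cos_sim psi y z)
      = a\<^sup>2 + 2 * a * b * cos_sim psi u v + b\<^sup>2" .
  have "KL ?p pref
      = (if a = 0 then 0 else a * ln (a / pref u)) + (if b = 0 then 0 else b * ln (b / pref v))"
    unfolding KL_def
    by (rule sum_two_point_mass[OF assms(1), of "\<lambda>x y. if x = 0 then 0 else x * ln (x / pref y)"]) simp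
  then show ?thesis
    unfolding objJ_def quadratic by (simp add: linear)
qed

lemma objJ_segment_gain:
  fixes r pref :: "'y::finite \<Rightarrow> real" and psi :: "'y \<Rightarrow> real ^ 'd"
  assumes "u \<noteq> v" and "norm (psi u) = 1" "norm (psi v) = 1"
    and "pref u > 0" "pref v > 0" and "0 < t" "t < 1"
  shows "objJ r pref psi aKL adiv (\<lambda>y. (1 - t) * point_mass u y + t * point_mass v y)
      - objJ r pref psi aKL adiv (point_mass u)
    = t * (r v - r u + aKL * ln (pref v / pref u)) - aKL * ((1 - t) * ln (1 - t) + t * ln t)
      + adiv * t * (1 - t) * (1 - cos_sim psi u v)"
proof -
  have "point_mass u = (\<lambda>y. 1 * point_mass u y + 0 * point_mass v y)"
    by simp
  then have "objJ r pref psi aKL adiv (point_mass u)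
      = r u - aKL * ln (1 / pref u) - adiv / 2"
    using objJ_two_point[OF assms(1-3), of r pref aKL adiv 1 0] by simp
  then show ?thesis
    using objJ_two_point[OF assms(1-3), of r pref aKL adiv "1 - t" t] assms(4-7)
    by (simp add: ln_div power2_eq_square algebra_simps)
qed

lemma objJ_point_mass_slope_eventually_eq:
  fixes r pref :: "'y::finite \<Rightarrow> real" and psi :: "'y \<Rightarrow> real ^ 'd"
  assumes "u \<noteq> v" and "norm (psi u) = 1" "norm (psi v) = 1" and "pref u > 0" "pref v > 0"
  shows "\<forall>\<^sub>F t in at_right 0.
      (objJ r pref psi aKL adiv (\<lambda>y. (1 - t) * point_mass u y + t * point_mass v y)
        - objJ r pref psi aKL adiv (point_mass u)) / t
    = r v - r u + aKL * ln (pref v / pref u) - aKL * ((1 - t) * ln (1 - t) / t + ln t)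
      + adiv * (1 - cos_sim psi u v) * (1 - t)"
  using eventually_at_right_less[of "0::real"] eventually_at_right_less_1
proof eventually_elim
  case (elim t)
  then show ?case
    unfolding objJ_segment_gain[OF assms elim] by (simp add: field_simps)
qed

lemma binary_entropy_slope_at_top:
  fixes a A B :: real
  assumes "a > 0"
  shows "filterlim (\<lambda>t. A - a * ((1 - t) * ln (1 - t) / t + ln t) + B * (1 - t)) at_top (at_right 0)"
  using assms by real_asymp

lemma objJ_point_mass_slope_at_top:
  fixes r pref :: "'y::finite \<Rightarrow> real" and psi :: "'y \<Rightarrow> real ^ 'd"
  assumes "u \<noteq> v" and "norm (psi u) = 1" "norm (psi v) = 1" and "pref u > 0" "pref v > 0"
    and "aKL > 0"
  shows "filterlim (\<lambda>t. (objJ r pref psi aKL adiv (\<lambda>y. (1 - t) * point_mass u y + t * point_mass v y)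
      - objJ r pref psi aKL adiv (point_mass u)) / t) at_top (at_right 0)"
proof -
  have "filterlim (\<lambda>t. r v - r u + aKL * ln (pref v / pref u) - aKL * ((1 - t) * ln (1 - t) / t + ln t)
      + adiv * (1 - cos_sim psi u v) * (1 - t)) at_top (at_right 0)"
    by (rule binary_entropy_slope_at_top[OF \<open>aKL > 0\<close>])
  then show ?thesis
    by (subst filterlim_cong[OF refl refl objJ_point_mass_slope_eventually_eq[OF assms(1-5)]])
qed

lemma objJ_point_mass_slope_tendsto:
  fixes r pref :: "'y::finite \<Rightarrow> real" and psi :: "'y \<Rightarrow> real ^ 'd"
  assumes "u \<noteq> v" and "norm (psi u) = 1" "norm (psi v) = 1" and "pref u > 0" "pref v > 0"
  shows "((\<lambda>t. (objJ r pref psi 0 adiv (\<lambda>y. (1 - t) * point_mass u y + t * point_mass v y)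
      - objJ r pref psi 0 adiv (point_mass u)) / t)
    \<longlongrightarrow> r v - r u + adiv * (1 - cos_sim psi u v)) (at_right 0)"
proof (rule Lim_transform_eventually)
  show "((\<lambda>t. r v - r u + adiv * (1 - cos_sim psi u v) * (1 - t))
      \<longlongrightarrow> r v - r u + adiv * (1 - cos_sim psi u v)) (at_right 0)"
    by (auto intro!: tendsto_eq_intros)
  show "\<forall>\<^sub>F t in at_right 0. r v - r u + adiv * (1 - cos_sim psi u v) * (1 - t)
      = (objJ r pref psi 0 adiv (\<lambda>y. (1 - t) * point_mass u y + t * point_mass v y)
        - objJ r pref psi 0 adiv (point_mass u)) / t"
    using objJ_point_mass_slope_eventually_eq[OF assms, of r 0 adiv]
    by (auto elim: eventually_mono)
qed

theorem mainTheorem5: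
  fixes r :: "'y::finite \<Rightarrow> real" and pref :: "'y \<Rightarrow> real"
    and psi :: "'y \<Rightarrow> real ^ 'd" and aKL adiv :: real and ys y' :: 'y
  assumes "is_dist pref"
    and "\<forall>y. norm (psi y) = 1"
    and "aKL \<ge> 0" and "adiv \<ge> 0"
    and "ys \<noteq> y'" and "pref ys > 0" and "pref y' > 0"
  shows "(aKL > 0 \<longrightarrow>
            \<not> stationary_on (objJ r pref psi aKL adiv) (feasible pref) (point_mass ys))
       \<and> (aKL = 0 \<and> r ys - r y' < adiv * (1 - cos_sim psi ys y') \<longrightarrow>
            \<not> local_max_on (objJ r pref psi aKL adiv) (feasible pref) (point_mass ys))"
proof (intro conjI impI)
  have unit: "norm (psi ys) = 1" "norm (psi y') = 1"
    using assms(2) by auto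
  have feasible: "point_mass ys \<in> feasible pref" "point_mass y' \<in> feasible pref"
    using assms(6,7) by (auto intro: point_mass_in_feasible)
  show "\<not> stationary_on (objJ r pref psi aKL adiv) (feasible pref) (point_mass ys)"
    if "aKL > 0"
    using not_stationary_on_if_slope_tendsto_at_top[OF feasible(2)]
      objJ_point_mass_slope_at_top[OF assms(5) unit assms(6,7) that] by blast
  have "\<forall>\<^sub>F t in at_right 0. (\<lambda>y. (1 - t) * point_mass ys y + t * point_mass y' y) \<in> feasible pref"
    using eventually_at_right_less[of "0::real"] eventually_at_right_less_1
    by eventually_elim (auto intro: convex_comb_in_feasible[OF feasible])
  then show "\<not> local_max_on (objJ r pref psi aKL adiv) (feasible pref) (point_mass ys)"
    if "aKL = 0 \<and> r ys - r y' < adiv * (1 - cos_sim psi ys y')"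
    using not_local_max_on_if_slope_tendsto_pos[OF _
        objJ_point_mass_slope_tendsto[OF assms(5) unit assms(6,7), of r adiv]] that by auto
qed

end
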